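(* If $q\ge 7$ is an integer, then the achromatic number of $K_6\square K_q$ is at most $2q+7$.
   Context: For a finite simple graph $G$ and a finite colour set $C$, a vertex colouring $f:V(G)\to C$ is complete if for any two distinct colours $c_1,c_2\in C$ there is an edge $v_1v_2\in E(G)$ with $f(v_i)=c_i$, $i=1,2$. The achromatic number of $G$ is the maximum number of colours in a proper complete vertex colouring of $G$. The Cartesian product $G_1\square G_2$ has vertex set $V(G_1)\times V(G_2)$, with $(u_1,u_2)$ adjacent to $(w_1,w_2)$ iff either $u_1w_1\in E(G_1)$ and $u_2=w_2$, or $u_2w_2\in E(G_2)$ and $u_1=w_1$. *)

theory Defs
  imports Main
begin

definition simple_graph :: "'a set \<Rightarrow> 'a set set \<Rightarrow> bool" where
  "simple_graph V E \<longleftrightarrow> finite V \<and> (\<forall>e\<in>E. e \<subseteq> V \<and> card e = 2)"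

definition proper_colouring :: "'a set \<Rightarrow> 'a set set \<Rightarrow> ('a \<Rightarrow> 'c) \<Rightarrow> 'c set \<Rightarrow> bool" where
  "proper_colouring V E f C \<longleftrightarrow> f ` V \<subseteq> C \<and> (\<forall>u\<in>V. \<forall>v\<in>V. {u, v} \<in> E \<longrightarrow> f u \<noteq> f v)"

definition complete_colouring :: "'a set \<Rightarrow> 'a set set \<Rightarrow> ('a \<Rightarrow> 'c) \<Rightarrow> 'c set \<Rightarrow> bool" where
  "complete_colouring V E f C \<longleftrightarrow> f ` V \<subseteq> C \<and>
     (\<forall>c1\<in>C. \<forall>c2\<in>C. c1 \<noteq> c2 \<longrightarrow> (\<exists>v1\<in>V. \<exists>v2\<in>V. {v1, v2} \<in> E \<and> f v1 = c1 \<and> f v2 = c2))"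

text \<open>Achromatic number: maximum number of colours (size of a finite colour set,
  taken as a set of naturals w.l.o.g.) in a proper complete colouring.\<close>
definition achromatic_number :: "'a set \<Rightarrow> 'a set set \<Rightarrow> nat" where
  "achromatic_number V E = (GREATEST k. \<exists>(f :: 'a \<Rightarrow> nat) C. finite C \<and> card C = k \<and>
       proper_colouring V E f C \<and> complete_colouring V E f C)"

definition K_vertices :: "nat \<Rightarrow> nat set" where
  "K_vertices n = {0..<n}"
definition K_edges :: "nat \<Rightarrow> nat set set" where
  "K_edges n = {{u, v} | u v. u < n \<and> v < n \<and> u \<noteq> v}"

definition cart_vertices :: "'a set \<Rightarrow> 'b set \<Rightarrow> ('a \<times> 'b) set" where
  "cart_vertices V1 V2 = V1 \<times> V2"
definition cart_edges :: "'a set \<Rightarrow> 'a set set \<Rightarrow> 'b set \<Rightarrow> 'b set set \<Rightarrow> ('a \<times> 'b) set set" where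
  "cart_edges V1 E1 V2 E2 =
     {{(u1, u2), (w1, w2)} | u1 u2 w1 w2.
        u1 \<in> V1 \<and> w1 \<in> V1 \<and> u2 \<in> V2 \<and> w2 \<in> V2 \<and>
        (({u1, w1} \<in> E1 \<and> u2 = w2) \<or> ({u2, w2} \<in> E2 \<and> u1 = w1))}"

end

theory Submission
  imports Defs "HOL-Number_Theory.Cong"
begin

text \<open>The vertices of \<open>K\<^sub>m \<box> K\<^sub>n\<close> are the squares of an \<open>m \<times> n\<close> board, adjacent
  when they share a row or a column, so a colour class of a proper colouring is a set of
  non-attacking rooks. \<open>k\<close> such rooks occupy \<open>k\<close> rows and \<open>k\<close> columns and hence see at most
  \<open>k(m + n) - k - k\<^sup>2\<close> other squares. In a complete colouring every class must see all other
  colours, so with at least \<open>2(m + n) - 4\<close> colours no class has at most two vertices, and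
  counting vertices gives \<open>3 |C| \<le> mn\<close>. For \<open>m = 6\<close> and \<open>2q + 8\<close> colours this reads
  \<open>6q + 24 \<le> 6q\<close>.

  Since the achromatic number is a \<open>GREATEST\<close>, the bound also needs one complete proper
  colouring to exist: the Latin-square colouring \<open>(i + j) mod q\<close>, which is where \<open>q \<ge> 6\<close>
  is used.\<close>

abbreviation rook_vertices :: "nat \<Rightarrow> nat \<Rightarrow> (nat \<times> nat) set" where
  "rook_vertices m n \<equiv> cart_vertices (K_vertices m) (K_vertices n)"

abbreviation rook_edges :: "nat \<Rightarrow> nat \<Rightarrow> (nat \<times> nat) set set" where
  "rook_edges m n \<equiv> cart_edges (K_vertices m) (K_edges m) (K_vertices n) (K_edges n)"

definition neighbourhood :: "'a set \<Rightarrow> 'a set set \<Rightarrow> 'a set \<Rightarrow> 'a set" where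
  "neighbourhood V E A = {w \<in> V. \<exists>v\<in>A. {v, w} \<in> E}"

lemma achromatic_number_le:
  assumes "\<exists>(f :: 'a \<Rightarrow> nat) C. finite C \<and> proper_colouring V E f C \<and> complete_colouring V E f C"
    and "\<And>(f :: 'a \<Rightarrow> nat) C. finite C \<Longrightarrow> proper_colouring V E f C \<Longrightarrow>
           complete_colouring V E f C \<Longrightarrow> card C \<le> b"
  shows "achromatic_number V E \<le> b"
proof -
  let ?P = "\<lambda>k. \<exists>(f :: 'a \<Rightarrow> nat) C. finite C \<and> card C = k \<and>
                  proper_colouring V E f C \<and> complete_colouring V E f C"
  have bounded: "k \<le> b" if "?P k" for k
    using that assms(2) by blast
  from assms(1) obtain k where "?P k" by blast
  then have "?P (Greatest ?P)"
    using bounded by (rule GreatestI_nat)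
  then show ?thesis
    unfolding achromatic_number_def by (rule bounded)
qed

lemma complete_colouring_card_le_neighbourhood:
  assumes "finite V" and "complete_colouring V E f C" and "c \<in> C"
  shows "card C - 1 \<le> card (neighbourhood V E {v \<in> V. f v = c})"
proof -
  let ?N = "neighbourhood V E {v \<in> V. f v = c}"
  have "C - {c} \<subseteq> f ` ?N"
  proof
    fix c' assume "c' \<in> C - {c}"
    with assms(2,3) have "\<exists>v\<in>V. \<exists>w\<in>V. {v, w} \<in> E \<and> f v = c \<and> f w = c'"
      unfolding complete_colouring_def by (metis DiffE singletonI)
    then show "c' \<in> f ` ?N"
      unfolding neighbourhood_def by auto
  qed
  moreover have "finite ?N"
    using assms(1) unfolding neighbourhood_def by simp
  ultimately have "card (C - {c}) \<le> card (f ` ?N)"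
    by (intro card_mono) simp_all
  also have "\<dots> \<le> card ?N"
    by (rule card_image_le) fact
  finally show ?thesis
    using assms(3) by (simp add: card_Diff_singleton_if)
qed

lemma card_eq_sum_card_colour_classes:
  assumes "finite V" and "finite C" and "f ` V \<subseteq> C"
  shows "card V = (\<Sum>c\<in>C. card {v \<in> V. f v = c})"
  using sum.group[OF assms, of "\<lambda>_. 1 :: nat"] by simp

lemma rook_edge_iff:
  "{(a1, a2), (b1, b2)} \<in> rook_edges m n \<longleftrightarrow>
     a1 < m \<and> b1 < m \<and> a2 < n \<and> b2 < n \<and> (a1 \<noteq> b1 \<and> a2 = b2 \<or> a1 = b1 \<and> a2 \<noteq> b2)"
  unfolding cart_edges_def K_edges_def K_vertices_def
  by (auto simp: doubleton_eq_iff) blast+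

lemma rook_neighbour_same_row_or_column:
  assumes "{v, w} \<in> rook_edges m n"
  shows "fst w = fst v \<and> snd w < n \<or> fst w < m \<and> snd w = snd v"
  using assms rook_edge_iff[of "fst v" "snd v" "fst w" "snd w"] by auto

lemma rook_independent_card_neighbourhood:
  assumes "A \<subseteq> rook_vertices m n" and independent: "\<forall>u\<in>A. \<forall>v\<in>A. {u, v} \<notin> rook_edges m n"
  shows "card (neighbourhood (rook_vertices m n) (rook_edges m n) A) + card A + card A * card A
           \<le> card A * (m + n)"
proof -
  let ?N = "neighbourhood (rook_vertices m n) (rook_edges m n) A"
  let ?R = "fst ` A \<times> {0..<n} \<union> {0..<m} \<times> snd ` A"
  have A_board: "fst ` A \<subseteq> {0..<m}" "snd ` A \<subseteq> {0..<n}"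
    using assms(1) unfolding cart_vertices_def K_vertices_def by auto
  have "finite A"
    using assms(1) finite_subset unfolding cart_vertices_def K_vertices_def by blast
  have non_attacking: "u = v" if "u \<in> A" "v \<in> A" "fst u = fst v \<or> snd u = snd v" for u v
  proof (rule ccontr)
    assume "u \<noteq> v"
    with that A_board have "{u, v} \<in> rook_edges m n"
      using rook_edge_iff[of "fst u" "snd u" "fst v" "snd v" m n] by (auto simp: prod_eq_iff)
    with independent that show False
      by blast
  qed
  then have "inj_on fst A" "inj_on snd A"
    by (metis inj_onI)+
  then have rows_cols: "card (fst ` A) = card A" "card (snd ` A) = card A"
    by (simp_all add: card_image)
  have "(fst ` A \<times> {0..<n}) \<inter> ({0..<m} \<times> snd ` A) = fst ` A \<times> snd ` A"
    using A_board by auto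
  then have "card (fst ` A \<times> {0..<n}) + card ({0..<m} \<times> snd ` A)
               = card ?R + card (fst ` A \<times> snd ` A)"
    using card_Un_Int[of "fst ` A \<times> {0..<n}" "{0..<m} \<times> snd ` A"] \<open>finite A\<close> by simp
  then have card_R: "card ?R + card A * card A = card A * (m + n)"
    using rows_cols by (simp add: card_cartesian_product algebra_simps)
  have "?N \<subseteq> ?R"
  proof
    fix w assume "w \<in> ?N"
    then obtain v where "v \<in> A" "{v, w} \<in> rook_edges m n"
      unfolding neighbourhood_def by blast
    then show "w \<in> ?R"
      using rook_neighbour_same_row_or_column[of v w m n] A_board by (auto simp: mem_Times_iff)
  qed
  moreover have "A \<subseteq> ?R"
    using A_board by (fastforce simp: mem_Times_iff image_iff)
  moreover have "?N \<inter> A = {}"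
    using independent unfolding neighbourhood_def by auto
  moreover have "finite ?R"
    using \<open>finite A\<close> by simp
  ultimately have "card ?N + card A \<le> card ?R"
    by (metis Un_least card_Un_disjoint card_mono finite_subset)
  then show ?thesis
    using card_R by linarith
qed

lemma rook_complete_colouring_card_le:
  assumes "finite C"
    and proper: "proper_colouring (rook_vertices m n) (rook_edges m n) f C"
    and complete: "complete_colouring (rook_vertices m n) (rook_edges m n) f C"
    and many_colours: "2 * (m + n) \<le> card C + 4" "3 \<le> card C"
  shows "3 * card C \<le> m * n"
proof -
  let ?V = "rook_vertices m n"
  have "finite ?V"
    unfolding cart_vertices_def K_vertices_def by simp
  have large_classes: "3 \<le> card {v \<in> ?V. f v = c}" if "c \<in> C" for c
  proof (rule ccontr)
    let ?A = "{v \<in> ?V. f v = c}"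
    assume "\<not> 3 \<le> card ?A"
    then consider "card ?A = 0" | "card ?A = 1" | "card ?A = 2"
      by linarith
    moreover have "card C - 1 \<le> card (neighbourhood ?V (rook_edges m n) ?A)"
      using complete_colouring_card_le_neighbourhood[OF \<open>finite ?V\<close> complete that] .
    moreover have "\<forall>u\<in>?A. \<forall>v\<in>?A. {u, v} \<notin> rook_edges m n"
      using proper unfolding proper_colouring_def by blast
    then have "card (neighbourhood ?V (rook_edges m n) ?A) + card ?A + card ?A * card ?A
                 \<le> card ?A * (m + n)"
      by (intro rook_independent_card_neighbourhood) auto
    ultimately show False
      using many_colours by cases auto
  qed
  have "3 * card C = (\<Sum>c\<in>C. 3)"
    by simp
  also have "\<dots> \<le> (\<Sum>c\<in>C. card {v \<in> ?V. f v = c})"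
    using large_classes by (rule sum_mono)
  also have "\<dots> = card ?V"
    using \<open>finite ?V\<close> \<open>finite C\<close> proper unfolding proper_colouring_def
    by (intro card_eq_sum_card_colour_classes[symmetric]) simp_all
  also have "\<dots> = m * n"
    unfolding cart_vertices_def K_vertices_def by (simp add: card_cartesian_product)
  finally show ?thesis .
qed

lemma rook_diagonal_colouring_proper:
  assumes "m \<le> n"
  shows "proper_colouring (rook_vertices m n) (rook_edges m n) (\<lambda>(i, j). (i + j) mod n) {0..<n}"
proof -
  have "(i + j) mod n \<noteq> (i' + j') mod n" if "{(i, j), (i', j')} \<in> rook_edges m n" for i j i' j'
  proof -
    have "i < n" "i' < n" "j < n" "j' < n" "i \<noteq> i' \<and> j = j' \<or> i = i' \<and> j \<noteq> j'"
      using that assms by (auto simp: rook_edge_iff)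
    then show ?thesis
      using cong_less_modulus_unique_nat cong_add_rcancel_nat cong_add_lcancel_nat
      unfolding cong_def by metis
  qed
  then show ?thesis
    unfolding proper_colouring_def cart_vertices_def K_vertices_def by auto
qed

lemma rook_diagonal_colouring_complete:
  assumes "0 < m"
  shows "complete_colouring (rook_vertices m n) (rook_edges m n) (\<lambda>(i, j). (i + j) mod n) {0..<n}"
proof -
  let ?g = "\<lambda>(i, j). (i + j) mod n"
  have "\<exists>v1\<in>rook_vertices m n. \<exists>v2\<in>rook_vertices m n.
          {v1, v2} \<in> rook_edges m n \<and> ?g v1 = c1 \<and> ?g v2 = c2"
    if "c1 < n" "c2 < n" "c1 \<noteq> c2" for c1 c2
  proof -
    have edge: "{(0, c1), (0, c2)} \<in> rook_edges m n"
      using that assms by (simp add: rook_edge_iff)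
    have vertices: "(0, c1) \<in> rook_vertices m n" "(0, c2) \<in> rook_vertices m n"
      using that assms by (simp_all add: cart_vertices_def K_vertices_def)
    show ?thesis
      by (rule bexI[of _ "(0, c1)"], rule bexI[of _ "(0, c2)"]) (simp_all add: edge vertices that)
  qed
  moreover have "?g ` rook_vertices m n \<subseteq> {0..<n}"
    by (auto simp: cart_vertices_def K_vertices_def)
  ultimately show ?thesis
    unfolding complete_colouring_def by auto
qed

theorem corollary1:
  fixes q :: nat
  assumes "q \<ge> 7"
  shows "achromatic_number (cart_vertices (K_vertices 6) (K_vertices q))
           (cart_edges (K_vertices 6) (K_edges 6) (K_vertices q) (K_edges q)) \<le> 2 * q + 7"
proof (rule achromatic_number_le)
  let ?g = "\<lambda>(i, j). (i + j) mod q"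
  have "proper_colouring (rook_vertices 6 q) (rook_edges 6 q) ?g {0..<q}"
    using assms by (intro rook_diagonal_colouring_proper) simp
  moreover have "complete_colouring (rook_vertices 6 q) (rook_edges 6 q) ?g {0..<q}"
    by (intro rook_diagonal_colouring_complete) simp
  ultimately show "\<exists>(f :: nat \<times> nat \<Rightarrow> nat) C. finite C \<and>
      proper_colouring (rook_vertices 6 q) (rook_edges 6 q) f C \<and>
      complete_colouring (rook_vertices 6 q) (rook_edges 6 q) f C"
    by blast
next
  fix f :: "nat \<times> nat \<Rightarrow> nat" and C
  assume colouring: "finite C" "proper_colouring (rook_vertices 6 q) (rook_edges 6 q) f C"
    "complete_colouring (rook_vertices 6 q) (rook_edges 6 q) f C"
  show "card C \<le> 2 * q + 7"
  proof (rule ccontr)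
    assume "\<not> card C \<le> 2 * q + 7"
    then have "3 * card C \<le> 6 * q"
      using colouring by (intro rook_complete_colouring_card_le) auto
    with \<open>\<not> card C \<le> 2 * q + 7\<close> show False
      by linarith
  qed
qed

end
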